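(* Let $p$ be a prime greater than $3$ and let $x$ be an indeterminate. Then $$\sum_{k=0}^{[p/3]}\frac{(3k)!}{27^k\,k!^3}\big(x^k-(-1)^{[p/3]}(1-x)^k\big)\equiv0\pmod p.$$
   Context: $[y]$ is the greatest integer not exceeding $y$. The congruence is coefficientwise for polynomials with rational coefficients having denominators prime to $p$. *)

theory Defs
  imports "HOL-Computational_Algebra.Polynomial" "HOL-Computational_Algebra.Primes"
begin

definition rat_cong0 :: "nat \<Rightarrow> rat \<Rightarrow> bool" where
  "rat_cong0 p q \<longleftrightarrow> (\<exists>n d::int. d \<noteq> 0 \<and> \<not> int p dvd d \<and> int p dvd n \<and> q = of_int n / of_int d)"

definition poly_cong0 :: "nat \<Rightarrow> rat poly \<Rightarrow> bool" where
  "poly_cong0 p P \<longleftrightarrow> (\<forall>i. rat_cong0 p (coeff P i))"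

end

theory Submission
  imports Defs "HOL-Number_Theory.Cong"
begin

text \<open>
  Put n = [p/3] and m = p - 1 - n, so that {3n, 3m} = {-1, -2} modulo p. Comparing
  (3k)! = 3^k k! \<Prod>i<k. (3i+1)(3i+2) with 27^k k!^3 C(n,k) C(m,k) = 3^k k! \<Prod>i<k. (3n-3i)(3m-3i)
  factor by factor shows (3k)!/(27^k k!^3) = C(n,k) C(m,k) mod p for k \<le> n. After this replacement
  the coefficient of x^j is the integer C(n,j) C(m,j) - (-1)^(n+j) \<Sum>k. C(n,k) C(m,k) C(k,j), and by
  Vandermonde the sum is C(n,j) C(p-1-j,n). Since C(p-1-a,b) = (-1)^b C(a+b,b) mod p whenever
  a + b < p, both terms are congruent to (-1)^j C(n,j) C(n+j,j).
\<close>

lemma rat_cong0_of_int: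
  assumes "p \<noteq> 1" "int p dvd a"
  shows "rat_cong0 p (of_int a)"
  unfolding rat_cong0_def using assms by (intro exI[of _ a] exI[of _ 1]) auto

lemma rat_cong0_add:
  assumes "prime p" "rat_cong0 p x" "rat_cong0 p y"
  shows "rat_cong0 p (x + y)"
proof -
  obtain a b c d where "b \<noteq> 0" "\<not> int p dvd b" "int p dvd a" "x = of_int a / of_int b"
    "d \<noteq> 0" "\<not> int p dvd d" "int p dvd c" "y = of_int c / of_int d"
    using assms(2,3) unfolding rat_cong0_def by blast
  moreover have "\<not> int p dvd b * d" if "\<not> int p dvd b" "\<not> int p dvd d"
    using that assms(1) prime_dvd_mult_iff[of "int p"] by auto
  ultimately show ?thesis
    unfolding rat_cong0_def by (intro exI[of _ "a * d + c * b"] exI[of _ "b * d"]) (auto simp: field_simps)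
qed

lemma rat_cong0_mult_of_int:
  assumes "rat_cong0 p x"
  shows "rat_cong0 p (x * of_int c)"
proof -
  obtain a b where "b \<noteq> 0" "\<not> int p dvd b" "int p dvd a" "x = of_int a / of_int b"
    using assms unfolding rat_cong0_def by blast
  then show ?thesis
    unfolding rat_cong0_def by (intro exI[of _ "a * c"] exI[of _ b]) auto
qed

lemma rat_cong0_sum:
  assumes "prime p" "\<And>k. k \<in> A \<Longrightarrow> rat_cong0 p (f k)"
  shows "rat_cong0 p (sum f A)"
proof -
  have "rat_cong0 p 0"
    using rat_cong0_of_int[of p 0] assms(1) not_prime_1 by (metis dvd_0_right of_int_0)
  with assms show ?thesis
    by (induction A rule: infinite_finite_induct) (auto simp: rat_cong0_add)
qed

lemma rat_cong0_diff_of_cong: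
  assumes "[a = b * d] (mod int p)" "d \<noteq> 0" "\<not> int p dvd d"
  shows "rat_cong0 p (of_int a / of_int d - of_int b)"
proof -
  have "of_int a / of_int d - of_int b = (of_int (a - b * d) / of_int d :: rat)"
    using assms(2) by (simp add: field_simps)
  then show ?thesis
    unfolding rat_cong0_def using assms by (metis cong_iff_dvd_diff)
qed

lemma fact_mult_binomial_int:
  "fact k * int (n choose k) = (\<Prod>i<k. int n - int i)"
  using gbinomial_int_mult_fact[of k "int n"] by (simp add: int_binomial atLeast0LessThan)

lemma prod_negated_upper_eq_fact_mult_binomial:
  "(\<Prod>i<b. - int a - 1 - int i) = (-1) ^ b * (fact b * int (a + b choose b))"
  using gbinomial_int_negated_upper[of "- int a - 1" b] gbinomial_int_mult_fact[of b "- int a - 1"]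
  by (simp add: int_binomial atLeast0LessThan algebra_simps)

lemma binomial_prime_minus_cong:
  assumes "prime p" "a + b < p"
  shows "[int (p - 1 - a choose b) = (-1) ^ b * int (a + b choose b)] (mod int p)"
proof -
  have "[int (p - 1 - a) - int i = - int a - 1 - int i] (mod int p)" for i
    using assms by (simp add: cong_iff_dvd_diff of_nat_diff)
  then have "[fact b * int (p - 1 - a choose b) = (\<Prod>i<b. - int a - 1 - int i)] (mod int p)"
    unfolding fact_mult_binomial_int by (intro cong_prod)
  also have "(\<Prod>i<b. - int a - 1 - int i) = fact b * ((-1) ^ b * int (a + b choose b))"
    by (simp add: prod_negated_upper_eq_fact_mult_binomial)
  finally have "[fact b * int (p - 1 - a choose b) = fact b * ((-1) ^ b * int (a + b choose b))] (mod int p)" .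
  moreover have "coprime (fact b) (int p)"
  proof -
    have "\<not> p dvd fact b"
      using assms by (simp add: prime_dvd_fact_iff)
    then show ?thesis
      using assms(1) by (metis coprime_commute of_nat_fact prime_imp_coprime coprime_int_iff)
  qed
  ultimately show ?thesis
    using cong_mult_lcancel by blast
qed

lemma fact_three_mult:
  "fact (3 * k) = 3 ^ k * fact k * (\<Prod>i<k. (3 * i + 1) * (3 * i + 2) :: nat)"
proof (induction k)
  case (Suc k)
  have "3 * Suc k = Suc (Suc (Suc (3 * k)))"
    by simp
  then have "fact (3 * Suc k) = (3 * k + 3) * (3 * k + 2) * (3 * k + 1) * (fact (3 * k) :: nat)"
    by (simp only: fact_Suc) (simp add: algebra_simps)
  also have "\<dots> = 3 ^ Suc k * fact (Suc k) * (\<Prod>i<Suc k. (3 * i + 1) * (3 * i + 2))"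
    unfolding Suc.IH by (simp add: algebra_simps)
  finally show ?case .
qed simp

lemma prod_three_mult_eq_fact_mult_binomial:
  "(\<Prod>i<k. 3 * int n - 3 * int i) = 3 ^ k * (fact k * int (n choose k))"
proof -
  have "(\<Prod>i<k. 3 * int n - 3 * int i) = (\<Prod>i<k. 3 * (int n - int i))"
    by (simp add: right_diff_distrib)
  also have "\<dots> = 3 ^ k * (\<Prod>i<k. int n - int i)"
    by (simp only: prod.distrib prod_constant card_lessThan)
  finally show ?thesis
    by (simp add: fact_mult_binomial_int)
qed

lemma fact_three_mult_cong:
  fixes q :: int
  assumes "[3 * int n = -1] (mod q)" "[3 * int m = -2] (mod q)"
  shows "[fact (3 * k) = 27 ^ k * fact k ^ 3 * int (n choose k) * int (m choose k)] (mod q)"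
proof -
  have "[(3 * int n - 3 * int i) * (3 * int m - 3 * int i) = (3 * int i + 1) * (3 * int i + 2)] (mod q)" for i
  proof -
    have "[(3 * int n - 3 * int i) * (3 * int m - 3 * int i) = (- 1 - 3 * int i) * (- 2 - 3 * int i)] (mod q)"
      using assms by (intro cong_mult cong_diff cong_refl)
    then show ?thesis
      by (simp add: algebra_simps)
  qed
  then have "[(\<Prod>i<k. 3 * int n - 3 * int i) * (\<Prod>i<k. 3 * int m - 3 * int i)
      = (\<Prod>i<k. (3 * int i + 1) * (3 * int i + 2))] (mod q)"
    unfolding prod.distrib[symmetric] by (intro cong_prod)
  then have "[3 ^ k * fact k * ((\<Prod>i<k. 3 * int n - 3 * int i) * (\<Prod>i<k. 3 * int m - 3 * int i))
      = 3 ^ k * fact k * (\<Prod>i<k. (3 * int i + 1) * (3 * int i + 2))] (mod q)"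
    by (intro cong_mult cong_refl)
  also have "3 ^ k * fact k * (\<Prod>i<k. (3 * int i + 1) * (3 * int i + 2)) = fact (3 * k)"
    using arg_cong[OF fact_three_mult[of k], of int]
    by (simp only: of_nat_mult of_nat_power of_nat_fact of_nat_prod of_nat_add of_nat_numeral of_nat_1)
  finally have "[3 ^ k * fact k * ((\<Prod>i<k. 3 * int n - 3 * int i) * (\<Prod>i<k. 3 * int m - 3 * int i))
      = fact (3 * k)] (mod q)" .
  moreover have "(27 :: int) ^ k = 3 ^ k * 3 ^ k * 3 ^ k"
    by (simp flip: power_mult_distrib)
  ultimately show ?thesis
    by (simp add: prod_three_mult_eq_fact_mult_binomial power3_eq_cube cong_sym_eq)
      (simp add: algebra_simps)
qed

lemma rat_cong0_fact_three_mult_div: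
  assumes "prime p" "p \<noteq> 3" "k < p" "[fact (3 * k) = 27 ^ k * fact k ^ 3 * b] (mod int p)"
  shows "rat_cong0 p (of_nat (fact (3 * k)) / (27 ^ k * of_nat (fact k) ^ 3) - of_int b)"
proof -
  have "\<not> int p dvd 3"
  proof
    assume "int p dvd 3"
    then have "p dvd 3"
      using int_dvd_int_iff[of p 3] by simp
    then show False
      using assms(2) prime_gt_1_nat[OF assms(1)] dvd_imp_le[of p 3] by (cases "p = 2") auto
  qed
  moreover have "\<not> int p dvd fact k"
    using assms(1,3) int_dvd_int_iff[of p "fact k"] by (simp add: prime_dvd_fact_iff)
  moreover have "(27 :: int) ^ k * fact k ^ 3 = 3 ^ (3 * k) * fact k ^ 3"
    by (simp add: power_mult)
  moreover have "prime (int p)"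
    using assms(1) by simp
  ultimately have "\<not> int p dvd 27 ^ k * fact k ^ 3"
    by (metis prime_dvd_mult_iff prime_dvd_power)
  then have "rat_cong0 p (of_int (fact (3 * k)) / of_int (27 ^ k * fact k ^ 3) - of_int b)"
    using assms(4) by (intro rat_cong0_diff_of_cong) (auto simp: mult.commute)
  then show ?thesis
    by simp
qed

lemma sum_binomial_mult_binomial_mult_binomial:
  assumes "j \<le> n" "n \<le> m"
  shows "(\<Sum>k=0..n. (n choose k) * (m choose k) * (k choose j)) = (n choose j) * ((m + n - j) choose n)"
proof -
  have "(\<Sum>k=0..n. (n choose k) * (m choose k) * (k choose j)) = (\<Sum>k=j..n. (n choose k) * (m choose k) * (k choose j))"
    by (rule sum.mono_neutral_right) (use assms in auto)
  also have "\<dots> = (\<Sum>t=0..n-j. (n choose (t+j)) * (m choose (t+j)) * ((t+j) choose j))"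
    using sum.shift_bounds_cl_nat_ivl[of "\<lambda>k. (n choose k) * (m choose k) * (k choose j)" 0 j "n-j"] assms
    by simp
  also have "\<dots> = (\<Sum>t=0..n-j. (n choose j) * (((n-j) choose t) * (m choose ((m-j) - t))))"
  proof (rule sum.cong[OF refl])
    fix t assume t: "t \<in> {0..n-j}"
    have "(n choose (t+j)) * ((t+j) choose j) = (n choose j) * ((n-j) choose t)"
      using choose_mult[of j "t+j" n] t assms by simp
    moreover have "m choose (t+j) = m choose ((m-j) - t)"
      using binomial_symmetric[of "t+j" m] t assms by (simp add: diff_diff_add add.commute)
    ultimately show "(n choose (t+j)) * (m choose (t+j)) * ((t+j) choose j) = (n choose j) * (((n-j) choose t) * (m choose ((m-j) - t)))"
      by (metis mult.commute mult.left_commute)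
  qed
  also have "\<dots> = (n choose j) * (\<Sum>t\<le>m-j. ((n-j) choose t) * (m choose ((m-j) - t)))"
  proof -
    have "(\<Sum>t=0..n-j. ((n-j) choose t) * (m choose ((m-j) - t))) = (\<Sum>t\<le>m-j. ((n-j) choose t) * (m choose ((m-j) - t)))"
      by (rule sum.mono_neutral_left) (use assms in auto)
    then show ?thesis by (simp only: sum_distrib_left[symmetric])
  qed
  also have "\<dots> = (n choose j) * ((n - j + m) choose (m - j))"
    using vandermonde[of "n-j" m "m-j"] by (simp add: diff_diff_add)
  also have "(n - j + m) choose (m - j) = (m + n - j) choose n"
    using binomial_symmetric[of "m-j" "n-j+m"] assms by (simp add: algebra_simps)
  finally show ?thesis .
qed

lemma binomial_sum_cong:
  assumes "prime p" "n \<le> m" "m + n = p - 1"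
  shows "[int ((n choose j) * (m choose j))
      = (-1) ^ (n + j) * int (\<Sum>k=0..n. (n choose k) * (m choose k) * (k choose j))] (mod int p)"
proof (cases "j \<le> n")
  case True
  define Y where "Y = int (n + j choose j)"
  have "j + n < p" "m = p - 1 - n"
    using True assms prime_gt_0_nat[OF assms(1)] by linarith+
  then have m_cong: "[int (m choose j) = (-1) ^ j * Y] (mod int p)"
    and "[int (p - 1 - j choose n) = (-1) ^ n * Y] (mod int p)"
    using binomial_prime_minus_cong[OF assms(1), of n j] binomial_prime_minus_cong[OF assms(1), of j n]
      binomial_symmetric[of j "n + j"] by (simp_all add: Y_def add.commute)
  moreover have "(\<Sum>k=0..n. (n choose k) * (m choose k) * (k choose j)) = (n choose j) * (p - 1 - j choose n)"
    using sum_binomial_mult_binomial_mult_binomial[OF True assms(2)] assms(3) by simp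
  ultimately have sum_cong: "[int (\<Sum>k=0..n. (n choose k) * (m choose k) * (k choose j))
      = int (n choose j) * ((-1) ^ n * Y)] (mod int p)"
    by (simp add: cong_mult)
  have "[int ((n choose j) * (m choose j)) = int (n choose j) * ((-1) ^ j * Y)] (mod int p)"
    using m_cong by (simp add: cong_mult)
  also have "int (n choose j) * ((-1) ^ j * Y) = (-1) ^ (n + j) * (int (n choose j) * ((-1) ^ n * Y))"
  proof -
    have "(-1 :: int) ^ j = (-1) ^ (n + j) * (-1) ^ n"
      by (simp add: power_add mult_ac flip: power_mult_distrib)
    then show ?thesis
      by (simp only: mult_ac)
  qed
  also have "[\<dots> = (-1) ^ (n + j) * int (\<Sum>k=0..n. (n choose k) * (m choose k) * (k choose j))] (mod int p)"
    using sum_cong by (simp add: cong_mult cong_sym)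
  finally show ?thesis .
next
  case False
  then have "(\<Sum>k=0..n. (n choose k) * (m choose k) * (k choose j)) = 0"
    by (auto intro!: sum.neutral binomial_eq_0)
  with False show ?thesis
    by (simp add: binomial_eq_0)
qed

lemma prime_dvd_binomial_sum:
  assumes "prime p" "n \<le> m" "m + n = p - 1"
  shows "int p dvd (\<Sum>k=0..n. int ((n choose k) * (m choose k))
      * (of_bool (k = j) - (-1) ^ n * (-1) ^ j * int (k choose j)))"
proof -
  have "(\<Sum>k=0..n. int ((n choose k) * (m choose k)) * of_bool (k = j)) = int ((n choose j) * (m choose j))"
    by (cases "j \<le> n") (simp_all add: binomial_eq_0)
  then have "(\<Sum>k=0..n. int ((n choose k) * (m choose k)) * (of_bool (k = j) - (-1) ^ n * (-1) ^ j * int (k choose j)))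
      = int ((n choose j) * (m choose j))
        - (-1) ^ (n + j) * int (\<Sum>k=0..n. (n choose k) * (m choose k) * (k choose j))"
    by (simp add: right_diff_distrib sum_subtractf sum_distrib_left power_add mult_ac)
  then show ?thesis
    using binomial_sum_cong[OF assms, of j] by (simp add: cong_iff_dvd_diff dvd_diff_commute)
qed

lemma coeff_one_minus_X_power:
  "coeff ([:1, -1:] ^ k) j = ((-1) ^ j * of_nat (k choose j) :: 'a::comm_ring_1)"
proof (induction k arbitrary: j)
  case (Suc k)
  then show ?case
    by (cases j) (simp_all add: coeff_pCons algebra_simps)
qed (simp add: coeff_1 binomial_eq_0)

lemma coeff_sum_smult_X_power_diff:
  fixes c :: "nat \<Rightarrow> 'a::comm_ring_1"
  shows "coeff (\<Sum>k\<in>A. smult (c k) ([:0, 1:] ^ k - smult s ([:1, -1:] ^ k))) j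
    = (\<Sum>k\<in>A. c k * (of_bool (k = j) - s * (-1) ^ j * of_nat (k choose j)))"
proof -
  have "([:0, 1:] ^ k :: 'a poly) = monom 1 k" for k
    by (simp add: monom_altdef)
  then show ?thesis
    by (simp add: coeff_sum coeff_one_minus_X_power of_bool_def algebra_simps)
qed

lemma rat_cong0_sum_mult_of_int:
  assumes "prime p" "\<And>k. k \<in> A \<Longrightarrow> rat_cong0 p (c k - of_int (b k))"
    and "int p dvd (\<Sum>k\<in>A. b k * e k)"
  shows "rat_cong0 p (\<Sum>k\<in>A. c k * of_int (e k))"
proof -
  have "(\<Sum>k\<in>A. c k * of_int (e k)) = (\<Sum>k\<in>A. (c k - of_int (b k)) * of_int (e k)) + of_int (\<Sum>k\<in>A. b k * e k)"
    by (simp add: algebra_simps flip: sum.distrib)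
  moreover have "rat_cong0 p (\<Sum>k\<in>A. (c k - of_int (b k)) * of_int (e k))"
    using assms(1,2) by (intro rat_cong0_sum rat_cong0_mult_of_int)
  moreover have "rat_cong0 p (of_int (\<Sum>k\<in>A. b k * e k))"
    using assms(1,3) not_prime_1 by (intro rat_cong0_of_int) blast+
  ultimately show ?thesis
    using assms(1) rat_cong0_add by simp
qed

lemma prime_div_three_cong:
  assumes "prime p" "p > 3"
  defines "n \<equiv> p div 3"
  shows "[3 * int n = -1] (mod int p) \<and> [3 * int (p - 1 - n) = -2] (mod int p)
    \<or> [3 * int n = -2] (mod int p) \<and> [3 * int (p - 1 - n) = -1] (mod int p)"
proof -
  have "\<not> 3 dvd p"
    using assms(1,2) by (auto simp: prime_nat_iff)
  then have "p = 3 * n + 1 \<or> p = 3 * n + 2"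
    unfolding n_def by presburger
  then show ?thesis
  proof
    assume "p = 3 * n + 1"
    then have "3 * int n - (-1) = int p * 1" "3 * int (p - 1 - n) - (-2) = int p * 2"
      by simp_all
    then show ?thesis
      unfolding cong_iff_dvd_diff by (simp only: dvd_triv_left simp_thms)
  next
    assume "p = 3 * n + 2"
    then have "3 * int n - (-2) = int p * 1" "3 * int (p - 1 - n) - (-1) = int p * 2"
      by simp_all
    then show ?thesis
      unfolding cong_iff_dvd_diff by (simp only: dvd_triv_left simp_thms)
  qed
qed

theorem theorem2p4:
  fixes p :: nat
  assumes "prime p" and "p > 3"
  shows "poly_cong0 p
    (\<Sum>k = 0..p div 3.
       smult (of_nat (fact (3*k)) / (27 ^ k * of_nat (fact k) ^ 3))
         ([:0, 1:] ^ k - smult ((-1) ^ (p div 3)) ([:1, -1:] ^ k)))"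
proof -
  define n where "n = p div 3"
  define m where "m = p - 1 - n"
  have nm: "n \<le> m" "m + n = p - 1"
    using assms(2) by (simp_all add: n_def m_def)
  have "[fact (3 * k) = 27 ^ k * fact k ^ 3 * int ((n choose k) * (m choose k))] (mod int p)" for k
    using prime_div_three_cong[OF assms] fact_three_mult_cong[of n "int p" m k] fact_three_mult_cong[of m "int p" n k]
    by (auto simp: n_def m_def mult_ac)
  then have "rat_cong0 p (of_nat (fact (3 * k)) / (27 ^ k * of_nat (fact k) ^ 3)
      - of_int (int ((n choose k) * (m choose k))))" if "k \<in> {0..n}" for k
    using that nm assms by (intro rat_cong0_fact_three_mult_div) auto
  then have "rat_cong0 p (\<Sum>k=0..n. of_nat (fact (3 * k)) / (27 ^ k * of_nat (fact k) ^ 3)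
      * of_int (of_bool (k = j) - (-1) ^ n * (-1) ^ j * int (k choose j)))" for j
    by (rule rat_cong0_sum_mult_of_int[OF assms(1) _ prime_dvd_binomial_sum[OF assms(1) nm]])
  then show ?thesis
    unfolding poly_cong0_def coeff_sum_smult_X_power_diff n_def[symmetric] by simp
qed

end
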